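(* Consider the mixed support-set model described in the context, and let $\mathsf p,\mathsf q_1,\dots,\mathsf q_h,\mathsf r_1,\dots,\mathsf r_m$ be $1+h+m$ distinct sensors. Then (whenever the conditioning event has positive probability) $\Pr\Big(i\in\mathcal T_{\mathsf p}\ \Big|\ i\in\hat{\mathcal T}_{\mathsf p}^{\complement},\ i\in\bigcap_{l=1}^{h}\hat{\mathcal T}_{\mathsf q_l},\ i\in\bigcap_{l=1}^{m}\hat{\mathcal T}_{\mathsf r_l}^{\complement}\Big)$ equals, writing $\phi=\frac{T}{N-T}\epsilon$, $$\frac{(1-\epsilon)^{h}\epsilon^{m+1}\frac{J}{N}+\epsilon\,\phi^{h}(1-\phi)^{m}\frac{I}{N}}{(1-\epsilon)^{h}\epsilon^{m+1}\frac{J}{N}+h(1-\epsilon)\phi^{h-1}(1-\phi)^{m+1}\frac{I}{N}+(m+1)\,\epsilon\,\phi^{h}(1-\phi)^{m}\frac{I}{N}+\phi^{h}(1-\phi)^{m+1}\frac{N-J-(m+h+1)I}{N}}.$$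
   Context: Let $N>T\ge1$ be integers and $\Omega=\{1,\dots,N\}$; complements are taken in $\Omega$. A finite set $\mathcal L$ of sensors is given. Mixed support-set model: there are a fixed set $\mathcal J\subseteq\Omega$ with $|\mathcal J|=J$ and, for each sensor $\mathsf p\in\mathcal L$, a fixed set $\mathcal I_{\mathsf p}\subseteq\Omega$ with $|\mathcal I_{\mathsf p}|=I$, such that $\mathcal I_{\mathsf p}\cap\mathcal J=\emptyset$ for all $\mathsf p$, $\mathcal I_{\mathsf p}\cap\mathcal I_{\mathsf q}=\emptyset$ for $\mathsf p\ne\mathsf q$, and the true support set of sensor $\mathsf p$ is $\mathcal T_{\mathsf p}=\mathcal I_{\mathsf p}\cup\mathcal J$; thus $T=I+J$. Each sensor has a random estimated support set $\hat{\mathcal T}_{\mathsf p}\subseteq\Omega$. A random index $i$ is uniformly distributed on $\Omega$ and independent of all estimates. System model: there is $\epsilon$ with $0\le\epsilon\le (N-T)/N$, common to all sensors, such that for every sensor $\mathsf p$ and every $j\in\Omega$, $\Pr(j\in\hat{\mathcal T}_{\mathsf p})=1-\epsilon$ if $j\in\mathcal T_{\mathsf p}$ and $\Pr(j\in\hat{\mathcal T}_{\mathsf p})=\frac{T}{N-T}\epsilon$ if $j\notin\mathcal T_{\mathsf p}$ (so $\Pr(i\in\hat{\mathcal T}_{\mathsf p})=T/N$, detection probability $1-\epsilon$, miss probability $\epsilon$, false-alarm probability $\frac{T}{N-T}\epsilon$). For each fixed $j\in\Omega$, the events $\{j\in\hat{\mathcal T}_{\mathsf p}\}$, $\mathsf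 p\in\mathcal L$, are mutually independent. Convention: $0^0=1$ and a term with coefficient $0$ is $0$. *)

theory Defs
  imports "HOL-Probability.Probability"
begin

end

theory Submission
  imports Defs
begin

text \<open>Condition on the value \<open>j\<close> of the uniform index \<open>i\<close>, which is independent of the
estimates. Given \<open>i = j\<close>, membership of \<open>j\<close> in the estimated supports is independent across
sensors, so the probability of the observed pattern (missed by \<open>p\<close>, detected by every \<open>q\<^sub>l\<close>,
missed by every \<open>r\<^sub>l\<close>) is a product of detection and miss probabilities. Because the private
supports \<open>I\<^sub>s\<close> are disjoint, this product takes only four values, according to whether \<open>j\<close> lies
in the common support, in the private support of \<open>p\<close> or of some \<open>r\<^sub>l\<close>, in that of some \<open>q\<^sub>l\<close>, or
in no true support; these classes have sizes \<open>J\<close>, \<open>(m + 1) I\<close>, \<open>h I\<close> and \<open>N - J - (m + h + 1) I\<close>.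
Averaging over \<open>j\<close> gives numerator and denominator of the conditional probability.\<close>

lemma prod_if_eq_const:
  assumes "finite S" "a \<in> S"
  shows "(\<Prod>l\<in>S. if l = a then x else y) = x * y ^ (card S - 1)"
proof -
  have "(\<Prod>l\<in>S. if l = a then x else y) = x * (\<Prod>l\<in>S - {a}. if l = a then x else y)"
    using assms by (simp add: prod.remove)
  also have "(\<Prod>l\<in>S - {a}. if l = a then x else y) = (\<Prod>l\<in>S - {a}. y)"
    by (rule prod.cong) auto
  finally show ?thesis using assms by simp
qed

lemma (in algebra) Collect_in_notin_sets:
  assumes "finite K" "finite C" "\<And>s. s \<in> K \<union> C \<Longrightarrow> A s \<in> M"
  shows "{x \<in> \<Omega>. (\<forall>s\<in>K. x \<in> A s) \<and> (\<forall>s\<in>C. x \<notin> A s)} \<in> M"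
proof -
  have "{x \<in> \<Omega>. (\<forall>s\<in>K. x \<in> A s) \<and> (\<forall>s\<in>C. x \<notin> A s)}
      = \<Omega> - (\<Union>s\<in>K. \<Omega> - A s) - (\<Union>s\<in>C. A s)"
    by blast
  also have "\<dots> \<in> M"
    using assms by (intro Diff finite_UN compl_sets top) auto
  finally show ?thesis .
qed

context prob_space
begin

lemma prob_indep_events_in_notin:
  assumes indep: "indep_events A L"
    and "finite K" "finite C" "K \<subseteq> L" "C \<subseteq> L" "K \<inter> C = {}"
  shows "prob {x \<in> space M. (\<forall>s\<in>K. x \<in> A s) \<and> (\<forall>s\<in>C. x \<notin> A s)}
    = (\<Prod>s\<in>K. prob (A s)) * (\<Prod>s\<in>C. 1 - prob (A s))"
  using assms(3,2,4-6)
proof (induction C arbitrary: K rule: finite_induct)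
  case empty
  have A_events: "A ` L \<subseteq> events" using indep by (simp add: indep_events_def)
  show ?case
  proof (cases "K = {}")
    case False
    have "{x \<in> space M. \<forall>s\<in>K. x \<in> A s} = (\<Inter>s\<in>K. A s)"
      using False A_events empty.prems(2) sets.sets_into_space by blast
    with False empty.prems indep show ?thesis by (simp add: indep_events_def)
  qed (simp add: prob_space)
next
  case (insert c C)
  let ?E = "\<lambda>K C. {x \<in> space M. (\<forall>s\<in>K. x \<in> A s) \<and> (\<forall>s\<in>C. x \<notin> A s)}"
  have "A ` L \<subseteq> events" using indep by (simp add: indep_events_def)
  then have "?E K C \<in> events" "A c \<in> events"
    using insert.hyps(1) insert.prems by (auto intro!: sets.Collect_in_notin_sets)
  then have "prob (?E K C - A c) = prob (?E K C) - prob (?E K C \<inter> A c)"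
    by (rule finite_measure_Diff')
  moreover have "?E K C - A c = ?E K (insert c C)" "?E K C \<inter> A c = ?E (insert c K) C"
    by auto
  moreover have "prob (?E K C) = (\<Prod>s\<in>K. prob (A s)) * (\<Prod>s\<in>C. 1 - prob (A s))"
    using insert.prems by (intro insert.IH) auto
  moreover have "prob (?E (insert c K) C)
      = (\<Prod>s\<in>insert c K. prob (A s)) * (\<Prod>s\<in>C. 1 - prob (A s))"
    using insert.hyps(2) insert.prems by (intro insert.IH) auto
  moreover have "c \<notin> K" using insert.prems by blast
  ultimately show ?case
    using insert.hyps insert.prems(1) by (simp add: algebra_simps)
qed

lemma prob_split_by_index:
  fixes X :: "'a \<Rightarrow> 'i"
  assumes "finite S"
    and "\<And>j. j \<in> S \<Longrightarrow> {x \<in> space M. X x = j} \<in> events"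
    and "\<And>j. j \<in> S \<Longrightarrow> {x \<in> space M. P j x} \<in> events"
    and "\<And>j. j \<in> S \<Longrightarrow> prob ({x \<in> space M. X x = j} \<inter> {x \<in> space M. P j x})
                          = prob {x \<in> space M. X x = j} * prob {x \<in> space M. P j x}"
  shows "prob {x \<in> space M. X x \<in> S \<and> P (X x) x}
    = (\<Sum>j\<in>S. prob {x \<in> space M. X x = j} * prob {x \<in> space M. P j x})"
proof -
  have "{x \<in> space M. X x \<in> S \<and> P (X x) x}
      = (\<Union>j\<in>S. {x \<in> space M. X x = j} \<inter> {x \<in> space M. P j x})"
    by auto
  also have "prob \<dots> = (\<Sum>j\<in>S. prob ({x \<in> space M. X x = j} \<inter> {x \<in> space M. P j x}))"
    using assms(1-3) by (intro finite_measure_finite_Union) (auto simp: disjoint_family_on_def)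
  finally show ?thesis using assms(4) by simp
qed

end

text \<open>The false-alarm probability \<open>\<phi>\<close> is a free parameter here; the theorem instantiates it
with \<open>T \<epsilon> / (N - T)\<close>.\<close>

locale mixed_support_model = prob_space M
  for M :: "'w measure" and N I J :: nat and \<epsilon> \<phi> :: real and L :: "'s set"
    and Jset :: "nat set" and Iset :: "'s \<Rightarrow> nat set"
    and est :: "'s \<Rightarrow> 'w \<Rightarrow> nat set" and idx :: "'w \<Rightarrow> nat" +
  assumes Jset_subset: "Jset \<subseteq> {1..N}" and card_Jset: "card Jset = J"
    and Iset: "\<And>s. s \<in> L \<Longrightarrow> Iset s \<subseteq> {1..N} \<and> card (Iset s) = I \<and> Iset s \<inter> Jset = {}"
    and Iset_disjoint: "\<And>s s'. s \<in> L \<Longrightarrow> s' \<in> L \<Longrightarrow> s \<noteq> s' \<Longrightarrow> Iset s \<inter> Iset s' = {}"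
    and detected_events: "\<And>s j. s \<in> L \<Longrightarrow> {w \<in> space M. j \<in> est s w} \<in> events"
    and prob_detected: "\<And>s j. s \<in> L \<Longrightarrow> j \<in> {1..N} \<Longrightarrow>
      prob {w \<in> space M. j \<in> est s w} = (if j \<in> Iset s \<union> Jset then 1 - \<epsilon> else \<phi>)"
    and indep_detected: "\<And>j. j \<in> {1..N} \<Longrightarrow> indep_events (\<lambda>s. {w \<in> space M. j \<in> est s w}) L"
    and idx_range: "\<And>w. w \<in> space M \<Longrightarrow> idx w \<in> {1..N}"
    and idx_events: "\<And>j. {w \<in> space M. idx w = j} \<in> events"
    and prob_idx: "\<And>j. j \<in> {1..N} \<Longrightarrow> prob {w \<in> space M. idx w = j} = 1 / real N"
    and indep_idx_detected: "indep_set
      (sigma_sets (space M) {{w \<in> space M. idx w = j} | j. True})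
      (sigma_sets (space M) {{w \<in> space M. j \<in> est s w} | s j. s \<in> L})"
begin

abbreviation detected :: "nat \<Rightarrow> 's \<Rightarrow> 'w set" where
  "detected j s \<equiv> {w \<in> space M. j \<in> est s w}"

lemma N_pos: "0 < N"
proof -
  obtain w where "w \<in> space M" using not_empty by blast
  then show ?thesis using idx_range[of w] by auto
qed

lemma Iset_subset: "s \<in> L \<Longrightarrow> Iset s \<subseteq> {1..N}"
  using Iset by blast

lemma finite_Iset: "s \<in> L \<Longrightarrow> finite (Iset s)"
  using Iset_subset finite_subset by blast

lemma Iset_notin_other: "s \<in> L \<Longrightarrow> s' \<in> L \<Longrightarrow> s \<noteq> s' \<Longrightarrow> j \<in> Iset s \<Longrightarrow> j \<notin> Iset s'"
  using Iset_disjoint by blast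

lemma Iset_notin_Jset: "s \<in> L \<Longrightarrow> j \<in> Iset s \<Longrightarrow> j \<notin> Jset"
  using Iset by blast

lemma card_Iset: "s \<in> L \<Longrightarrow> card (Iset s) = I"
  using Iset by blast

lemma prob_detected_Jset: "s \<in> L \<Longrightarrow> j \<in> Jset \<Longrightarrow> prob (detected j s) = 1 - \<epsilon>"
  using prob_detected Jset_subset by auto

lemma prob_detected_Iset: "s \<in> L \<Longrightarrow> j \<in> Iset s \<Longrightarrow> prob (detected j s) = 1 - \<epsilon>"
  using prob_detected[of s j] Iset[of s] by auto

lemma prob_detected_other:
  "s \<in> L \<Longrightarrow> j \<in> {1..N} \<Longrightarrow> j \<notin> Jset \<Longrightarrow> j \<notin> Iset s \<Longrightarrow> prob (detected j s) = \<phi>"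
  by (simp add: prob_detected)

end

locale sensor_selection = mixed_support_model M N I J \<epsilon> \<phi> L Jset Iset est idx
  for M :: "'w measure" and N I J :: nat and \<epsilon> \<phi> :: real and L :: "'s set"
    and Jset :: "nat set" and Iset :: "'s \<Rightarrow> nat set"
    and est :: "'s \<Rightarrow> 'w \<Rightarrow> nat set" and idx :: "'w \<Rightarrow> nat" +
  fixes p :: 's and q r :: "nat \<Rightarrow> 's" and h m :: nat
  assumes p_in: "p \<in> L" and q_in: "q ` {1..h} \<subseteq> L" and r_in: "r ` {1..m} \<subseteq> L"
    and inj_q: "inj_on q {1..h}" and inj_r: "inj_on r {1..m}"
    and q_r_disjoint: "q ` {1..h} \<inter> r ` {1..m} = {}"
    and p_notin_q: "p \<notin> q ` {1..h}" and p_notin_r: "p \<notin> r ` {1..m}"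
begin

lemma q_in_L: "l \<in> {1..h} \<Longrightarrow> q l \<in> L"
  using q_in by auto

lemma r_in_L: "l \<in> {1..m} \<Longrightarrow> r l \<in> L"
  using r_in by auto

lemma q_ne_p: "l \<in> {1..h} \<Longrightarrow> q l \<noteq> p"
  using p_notin_q by auto

lemma r_ne_p: "l \<in> {1..m} \<Longrightarrow> r l \<noteq> p"
  using p_notin_r by auto

lemma q_ne_r: "l \<in> {1..h} \<Longrightarrow> l' \<in> {1..m} \<Longrightarrow> q l \<noteq> r l'"
  using q_r_disjoint by blast

definition observed :: "nat \<Rightarrow> 'w \<Rightarrow> bool" where
  "observed j w \<longleftrightarrow> j \<notin> est p w \<and> (\<forall>l\<in>{1..h}. j \<in> est (q l) w) \<and> (\<forall>l\<in>{1..m}. j \<notin> est (r l) w)"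

definition Q_support :: "nat set" where "Q_support = (\<Union>l\<in>{1..h}. Iset (q l))"
definition R_support :: "nat set" where "R_support = (\<Union>l\<in>{1..m}. Iset (r l))"

lemma observed_event:
  "{w \<in> space M. observed j w} = {w \<in> space M.
     (\<forall>s\<in>q ` {1..h}. w \<in> detected j s) \<and> (\<forall>s\<in>insert p (r ` {1..m}). w \<notin> detected j s)}"
  by (auto simp: observed_def)

lemma observed_in_events: "{w \<in> space M. observed j w} \<in> events"
  unfolding observed_event using p_in q_in r_in
  by (intro sets.Collect_in_notin_sets) (auto intro: detected_events)

lemma prob_observed:
  assumes "j \<in> {1..N}"
  shows "prob {w \<in> space M. observed j w} = (\<Prod>l\<in>{1..h}. prob (detected j (q l)))
    * ((1 - prob (detected j p)) * (\<Prod>l\<in>{1..m}. 1 - prob (detected j (r l))))"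
proof -
  have "prob {w \<in> space M. observed j w}
      = (\<Prod>s\<in>q ` {1..h}. prob (detected j s)) * (\<Prod>s\<in>insert p (r ` {1..m}). 1 - prob (detected j s))"
    unfolding observed_event using assms p_in q_in r_in q_r_disjoint p_notin_q
    by (intro prob_indep_events_in_notin[OF indep_detected]) auto
  also have "(\<Prod>s\<in>insert p (r ` {1..m}). 1 - prob (detected j s))
      = (1 - prob (detected j p)) * (\<Prod>s\<in>r ` {1..m}. 1 - prob (detected j s))"
    using p_notin_r by (intro prod.insert) auto
  finally show ?thesis
    unfolding prod.reindex[OF inj_q] prod.reindex[OF inj_r] comp_def .
qed

lemma prob_observed_Jset:
  assumes "j \<in> Jset"
  shows "prob {w \<in> space M. observed j w} = (1 - \<epsilon>) ^ h * \<epsilon> ^ (m + 1)"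
proof -
  have "j \<in> {1..N}" using assms Jset_subset by auto
  then show ?thesis
    using assms by (simp add: prob_observed prob_detected_Jset q_in_L r_in_L p_in)
qed

lemma prob_observed_Iset_p:
  assumes "j \<in> Iset p"
  shows "prob {w \<in> space M. observed j w} = \<epsilon> * \<phi> ^ h * (1 - \<phi>) ^ m"
proof -
  have j: "j \<in> {1..N}" "j \<notin> Jset"
    using assms Iset_subset[OF p_in] Iset_notin_Jset[OF p_in] by blast+
  have "j \<notin> Iset (q l)" if "l \<in> {1..h}" for l
    using Iset_notin_other[OF p_in q_in_L] that q_ne_p assms by metis
  moreover have "j \<notin> Iset (r l)" if "l \<in> {1..m}" for l
    using Iset_notin_other[OF p_in r_in_L] that r_ne_p assms by metis
  ultimately show ?thesis
    using j assms by (simp add: prob_observed prob_detected_Iset prob_detected_other q_in_L r_in_L p_in)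
qed

lemma prob_observed_Q_support:
  assumes "j \<in> Q_support"
  shows "prob {w \<in> space M. observed j w} = (1 - \<epsilon>) * \<phi> ^ (h - 1) * (1 - \<phi>) ^ (m + 1)"
proof -
  obtain l0 where l0: "l0 \<in> {1..h}" and j: "j \<in> Iset (q l0)"
    using assms unfolding Q_support_def by blast
  have jN: "j \<in> {1..N}" "j \<notin> Jset"
    using j Iset_subset[OF q_in_L[OF l0]] Iset_notin_Jset[OF q_in_L[OF l0]] by blast+
  have "prob (detected j (q l)) = (if l = l0 then 1 - \<epsilon> else \<phi>)" if "l \<in> {1..h}" for l
  proof (cases "l = l0")
    case False
    then have "j \<notin> Iset (q l)"
      using Iset_notin_other[OF q_in_L[OF l0] q_in_L[OF that]] inj_on_eq_iff[OF inj_q l0 that] j by blast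
    then show ?thesis using False jN that by (simp add: prob_detected_other q_in_L)
  qed (simp add: prob_detected_Iset[OF q_in_L[OF l0] j])
  then have "(\<Prod>l\<in>{1..h}. prob (detected j (q l))) = (1 - \<epsilon>) * \<phi> ^ (h - 1)"
    using l0 by (simp add: prod_if_eq_const)
  moreover have "j \<notin> Iset p"
    using Iset_notin_other[OF q_in_L[OF l0] p_in q_ne_p[OF l0] j] .
  moreover have "j \<notin> Iset (r l)" if "l \<in> {1..m}" for l
    using Iset_notin_other[OF q_in_L[OF l0] r_in_L[OF that] q_ne_r[OF l0 that] j] .
  ultimately show ?thesis
    using jN by (simp add: prob_observed prob_detected_other r_in_L p_in)
qed

lemma prob_observed_R_support:
  assumes "j \<in> R_support"
  shows "prob {w \<in> space M. observed j w} = \<epsilon> * \<phi> ^ h * (1 - \<phi>) ^ m"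
proof -
  obtain l0 where l0: "l0 \<in> {1..m}" and j: "j \<in> Iset (r l0)"
    using assms unfolding R_support_def by blast
  have jN: "j \<in> {1..N}" "j \<notin> Jset"
    using j Iset_subset[OF r_in_L[OF l0]] Iset_notin_Jset[OF r_in_L[OF l0]] by blast+
  have "1 - prob (detected j (r l)) = (if l = l0 then \<epsilon> else 1 - \<phi>)" if "l \<in> {1..m}" for l
  proof (cases "l = l0")
    case False
    then have "j \<notin> Iset (r l)"
      using Iset_notin_other[OF r_in_L[OF l0] r_in_L[OF that]] inj_on_eq_iff[OF inj_r l0 that] j by blast
    then show ?thesis using False jN that by (simp add: prob_detected_other r_in_L)
  qed (simp add: prob_detected_Iset[OF r_in_L[OF l0] j])
  then have "(\<Prod>l\<in>{1..m}. 1 - prob (detected j (r l))) = \<epsilon> * (1 - \<phi>) ^ (m - 1)"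
    using l0 by (simp add: prod_if_eq_const)
  moreover have "j \<notin> Iset p"
    using Iset_notin_other[OF r_in_L[OF l0] p_in r_ne_p[OF l0] j] .
  moreover have "j \<notin> Iset (q l)" if "l \<in> {1..h}" for l
    using Iset_notin_other[OF r_in_L[OF l0] q_in_L[OF that] q_ne_r[OF that l0, symmetric] j] .
  moreover have "(1 - \<phi>) * (1 - \<phi>) ^ (m - 1) = (1 - \<phi>) ^ m"
    using l0 by (simp add: power_eq_if)
  ultimately show ?thesis
    using jN by (simp add: prob_observed prob_detected_other q_in_L p_in)
qed

lemma prob_observed_other:
  assumes "j \<in> {1..N}" "j \<notin> Jset \<union> Iset p \<union> Q_support \<union> R_support"
  shows "prob {w \<in> space M. observed j w} = \<phi> ^ h * (1 - \<phi>) ^ (m + 1)"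
  using assms
  by (simp add: prob_observed prob_detected_other q_in_L r_in_L p_in Q_support_def R_support_def)

lemma card_Q_support: "card Q_support = h * I"
proof -
  have "card Q_support = (\<Sum>l\<in>{1..h}. card (Iset (q l)))"
    unfolding Q_support_def
  proof (rule card_UN_disjoint)
    show "\<forall>l\<in>{1..h}. \<forall>l'\<in>{1..h}. l \<noteq> l' \<longrightarrow> Iset (q l) \<inter> Iset (q l') = {}"
      using Iset_disjoint[OF q_in_L q_in_L] inj_on_eq_iff[OF inj_q] by metis
  qed (auto simp: finite_Iset q_in_L)
  then show ?thesis by (simp add: card_Iset q_in_L)
qed

lemma card_R_support: "card R_support = m * I"
proof -
  have "card R_support = (\<Sum>l\<in>{1..m}. card (Iset (r l)))"
    unfolding R_support_def
  proof (rule card_UN_disjoint)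
    show "\<forall>l\<in>{1..m}. \<forall>l'\<in>{1..m}. l \<noteq> l' \<longrightarrow> Iset (r l) \<inter> Iset (r l') = {}"
      using Iset_disjoint[OF r_in_L r_in_L] inj_on_eq_iff[OF inj_r] by metis
  qed (auto simp: finite_Iset r_in_L)
  then show ?thesis by (simp add: card_Iset r_in_L)
qed

lemma Jset_Iset_p_disjoint: "Jset \<inter> Iset p = {}"
  using Iset_notin_Jset[OF p_in] by blast

lemma Q_support_disjoint: "(Jset \<union> Iset p) \<inter> Q_support = {}"
proof -
  have "j \<notin> Jset \<and> j \<notin> Iset p" if j: "j \<in> Q_support" for j
  proof -
    obtain l where l: "l \<in> {1..h}" "j \<in> Iset (q l)" using j unfolding Q_support_def by blast
    show ?thesis
      using Iset_notin_Jset[OF q_in_L[OF l(1)] l(2)] Iset_notin_other[OF q_in_L[OF l(1)] p_in q_ne_p[OF l(1)] l(2)]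
      by blast
  qed
  then show ?thesis by blast
qed

lemma R_support_disjoint: "(Jset \<union> Iset p \<union> Q_support) \<inter> R_support = {}"
proof -
  have "j \<notin> Jset \<and> j \<notin> Iset p \<and> j \<notin> Q_support" if j: "j \<in> R_support" for j
  proof -
    obtain l where l: "l \<in> {1..m}" "j \<in> Iset (r l)" using j unfolding R_support_def by blast
    have "j \<notin> Iset (q l')" if "l' \<in> {1..h}" for l'
      using Iset_notin_other[OF r_in_L[OF l(1)] q_in_L[OF that] q_ne_r[OF that l(1), symmetric] l(2)] .
    then show ?thesis
      using Iset_notin_Jset[OF r_in_L[OF l(1)] l(2)] Iset_notin_other[OF r_in_L[OF l(1)] p_in r_ne_p[OF l(1)] l(2)]
      unfolding Q_support_def by blast
  qed
  then show ?thesis by blast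
qed

lemma sum_prob_observed_Iset_p_Jset:
  "(\<Sum>j\<in>Iset p \<union> Jset. prob {w \<in> space M. observed j w})
    = real J * ((1 - \<epsilon>) ^ h * \<epsilon> ^ (m + 1)) + real I * (\<epsilon> * \<phi> ^ h * (1 - \<phi>) ^ m)"
proof -
  have "(\<Sum>j\<in>Iset p \<union> Jset. prob {w \<in> space M. observed j w})
      = (\<Sum>j\<in>Iset p. prob {w \<in> space M. observed j w}) + (\<Sum>j\<in>Jset. prob {w \<in> space M. observed j w})"
    using Jset_Iset_p_disjoint finite_Iset[OF p_in] finite_subset[OF Jset_subset]
    by (intro sum.union_disjoint) auto
  then show ?thesis
    by (simp add: prob_observed_Iset_p prob_observed_Jset card_Iset[OF p_in] card_Jset)
qed

lemma sum_prob_observed: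
  "(\<Sum>j\<in>{1..N}. prob {w \<in> space M. observed j w})
    = real J * ((1 - \<epsilon>) ^ h * \<epsilon> ^ (m + 1))
      + real h * real I * ((1 - \<epsilon>) * \<phi> ^ (h - 1) * (1 - \<phi>) ^ (m + 1))
      + real (m + 1) * real I * (\<epsilon> * \<phi> ^ h * (1 - \<phi>) ^ m)
      + (real N - real J - real (m + h + 1) * real I) * (\<phi> ^ h * (1 - \<phi>) ^ (m + 1))"
proof -
  let ?f = "\<lambda>j. prob {w \<in> space M. observed j w}"
  define S where "S = Jset \<union> Iset p \<union> Q_support \<union> R_support"
  have finite_parts: "finite Jset" "finite (Iset p)" "finite Q_support" "finite R_support"
    using finite_subset[OF Jset_subset] finite_Iset p_in q_in_L r_in_L
    by (auto simp: Q_support_def R_support_def)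
  have S_subset: "S \<subseteq> {1..N}"
    unfolding S_def Q_support_def R_support_def
    using Jset_subset Iset_subset[OF p_in] Iset_subset[OF q_in_L] Iset_subset[OF r_in_L] by blast
  have sum_S: "sum ?f S = sum ?f Jset + sum ?f (Iset p) + sum ?f Q_support + sum ?f R_support"
    unfolding S_def using finite_parts Jset_Iset_p_disjoint Q_support_disjoint R_support_disjoint
    by (simp add: sum.union_disjoint)
  have card_S: "card S = J + I + h * I + m * I"
    unfolding S_def using finite_parts Jset_Iset_p_disjoint Q_support_disjoint R_support_disjoint
    by (simp add: card_Un_disjoint card_Jset card_Iset[OF p_in] card_Q_support card_R_support)
  have "sum ?f {1..N} = sum ?f S + sum ?f ({1..N} - S)"
    using S_subset by (simp add: sum.subset_diff)
  also have "sum ?f ({1..N} - S) = sum (\<lambda>_. \<phi> ^ h * (1 - \<phi>) ^ (m + 1)) ({1..N} - S)"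
    by (rule sum.cong) (auto simp: prob_observed_other S_def)
  also have "\<dots> = real (N - card S) * (\<phi> ^ h * (1 - \<phi>) ^ (m + 1))"
    using S_subset by (simp add: card_Diff_subset finite_subset)
  finally show ?thesis
    using sum_S card_S card_mono[OF _ S_subset]
    by (simp add: prob_observed_Jset prob_observed_Iset_p prob_observed_Q_support prob_observed_R_support
        card_Jset card_Iset[OF p_in] card_Q_support card_R_support of_nat_diff algebra_simps)
qed

lemma prob_idx_observed:
  assumes "S \<subseteq> {1..N}"
  shows "prob {w \<in> space M. idx w \<in> S \<and> observed (idx w) w}
    = (\<Sum>j\<in>S. prob {w \<in> space M. observed j w}) / real N"
proof -
  let ?G = "{{w \<in> space M. j \<in> est s w} | s j. s \<in> L}"
  interpret G: sigma_algebra "space M" "sigma_sets (space M) ?G"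
    by (rule sigma_algebra_sigma_sets) auto
  have "detected j s \<in> sigma_sets (space M) ?G" if "s \<in> L" for j s
    using that by (intro sigma_sets.Basic) blast
  then have observed: "{w \<in> space M. observed j w} \<in> sigma_sets (space M) ?G" for j
    unfolding observed_event using p_in q_in r_in by (intro G.Collect_in_notin_sets) auto
  have idx: "{w \<in> space M. idx w = j} \<in> sigma_sets (space M) {{w \<in> space M. idx w = j} | j. True}" for j
    by (rule sigma_sets.Basic) blast
  have "prob ({w \<in> space M. idx w = j} \<inter> {w \<in> space M. observed j w})
      = prob {w \<in> space M. idx w = j} * prob {w \<in> space M. observed j w}" for j
    by (rule indep_setD[OF indep_idx_detected idx observed])
  then have "prob {w \<in> space M. idx w \<in> S \<and> observed (idx w) w}
      = (\<Sum>j\<in>S. prob {w \<in> space M. idx w = j} * prob {w \<in> space M. observed j w})"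
    using assms finite_subset
    by (intro prob_split_by_index) (auto intro: idx_events observed_in_events)
  also have "\<dots> = (\<Sum>j\<in>S. prob {w \<in> space M. observed j w} / real N)"
    using assms by (intro sum.cong) (auto simp: prob_idx)
  finally show ?thesis by (simp add: sum_divide_distrib)
qed

lemma cond_prob_observed:
  "cond_prob M (\<lambda>w. idx w \<in> Iset p \<union> Jset) (\<lambda>w. observed (idx w) w) =
      ((1 - \<epsilon>) ^ h * \<epsilon> ^ (m + 1) * (real J / real N)
        + \<epsilon> * \<phi> ^ h * (1 - \<phi>) ^ m * (real I / real N))
      / ((1 - \<epsilon>) ^ h * \<epsilon> ^ (m + 1) * (real J / real N)
        + real h * (1 - \<epsilon>) * \<phi> ^ (h - 1) * (1 - \<phi>) ^ (m + 1) * (real I / real N)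
        + real (m + 1) * \<epsilon> * \<phi> ^ h * (1 - \<phi>) ^ m * (real I / real N)
        + \<phi> ^ h * (1 - \<phi>) ^ (m + 1)
            * ((real N - real J - real (m + h + 1) * real I) / real N))"
proof -
  have support_p: "Iset p \<union> Jset \<subseteq> {1..N}" using Iset_subset[OF p_in] Jset_subset by blast
  have numerator: "prob {w \<in> space M. idx w \<in> Iset p \<union> Jset \<and> observed (idx w) w}
      = (1 - \<epsilon>) ^ h * \<epsilon> ^ (m + 1) * (real J / real N) + \<epsilon> * \<phi> ^ h * (1 - \<phi>) ^ m * (real I / real N)"
    unfolding prob_idx_observed[OF support_p] sum_prob_observed_Iset_p_Jset
    using N_pos by (simp add: field_simps)
  have observed_idx: "{w \<in> space M. observed (idx w) w}
      = {w \<in> space M. idx w \<in> {1..N} \<and> observed (idx w) w}"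
    using idx_range by blast
  have denominator: "prob {w \<in> space M. observed (idx w) w}
      = (1 - \<epsilon>) ^ h * \<epsilon> ^ (m + 1) * (real J / real N)
        + real h * (1 - \<epsilon>) * \<phi> ^ (h - 1) * (1 - \<phi>) ^ (m + 1) * (real I / real N)
        + real (m + 1) * \<epsilon> * \<phi> ^ h * (1 - \<phi>) ^ m * (real I / real N)
        + \<phi> ^ h * (1 - \<phi>) ^ (m + 1) * ((real N - real J - real (m + h + 1) * real I) / real N)"
    unfolding observed_idx prob_idx_observed[OF order_refl] sum_prob_observed
    using N_pos by (simp add: field_simps)
  show ?thesis
    unfolding cond_prob_def numerator denominator ..
qed

end

theorem proposition5:
  fixes M :: "'w measure"
    and N T I J :: nat and \<epsilon> :: real
    and L :: "'s set"
    and Jset :: "nat set" and Iset :: "'s \<Rightarrow> nat set"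
    and est :: "'s \<Rightarrow> 'w \<Rightarrow> nat set"
    and idx :: "'w \<Rightarrow> nat"
    and p :: 's and q r :: "nat \<Rightarrow> 's" and h m :: nat
  assumes "prob_space M"
    and "N > T" and "T \<ge> 1" and "T = I + J"
    and "0 \<le> \<epsilon>" and "\<epsilon> \<le> (real N - real T) / real N"
    and "finite L"
    and "Jset \<subseteq> {1..N}" and "card Jset = J"
    and "\<And>s. s \<in> L \<Longrightarrow> Iset s \<subseteq> {1..N} \<and> card (Iset s) = I \<and> Iset s \<inter> Jset = {}"
    and "\<And>s s'. s \<in> L \<Longrightarrow> s' \<in> L \<Longrightarrow> s \<noteq> s' \<Longrightarrow> Iset s \<inter> Iset s' = {}"
    \<comment> \<open>estimated support sets are random subsets of Omega\<close>
    and "\<And>s w. s \<in> L \<Longrightarrow> w \<in> space M \<Longrightarrow> est s w \<subseteq> {1..N}"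
    and "\<And>s j. s \<in> L \<Longrightarrow> {w \<in> space M. j \<in> est s w} \<in> sets M"
    \<comment> \<open>system model: detection / false-alarm probabilities\<close>
    and "\<And>s j. s \<in> L \<Longrightarrow> j \<in> {1..N} \<Longrightarrow>
           measure M {w \<in> space M. j \<in> est s w} =
             (if j \<in> Iset s \<union> Jset then 1 - \<epsilon> else real T / (real N - real T) * \<epsilon>)"
    \<comment> \<open>for fixed j, the events across sensors are mutually independent\<close>
    and "\<And>j. j \<in> {1..N} \<Longrightarrow> prob_space.indep_events M (\<lambda>s. {w \<in> space M. j \<in> est s w}) L"
    \<comment> \<open>the index i is uniform on Omega\<close>
    and "\<And>w. w \<in> space M \<Longrightarrow> idx w \<in> {1..N}"
    and "\<And>j. {w \<in> space M. idx w = j} \<in> sets M"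
    and "\<And>j. j \<in> {1..N} \<Longrightarrow> measure M {w \<in> space M. idx w = j} = 1 / real N"
    \<comment> \<open>the index i is independent of all estimates\<close>
    and "prob_space.indep_set M
           (sigma_sets (space M) {{w \<in> space M. idx w = j} | j. True})
           (sigma_sets (space M) {{w \<in> space M. j \<in> est s w} | s j. s \<in> L})"
    \<comment> \<open>1+h+m distinct sensors\<close>
    and "p \<in> L" and "q ` {1..h} \<subseteq> L" and "r ` {1..m} \<subseteq> L"
    and "inj_on q {1..h}" and "inj_on r {1..m}"
    and "q ` {1..h} \<inter> r ` {1..m} = {}"
    and "p \<notin> q ` {1..h}" and "p \<notin> r ` {1..m}"
    and "measure M {w \<in> space M. idx w \<notin> est p w \<and> (\<forall>l\<in>{1..h}. idx w \<in> est (q l) w)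
                     \<and> (\<forall>l\<in>{1..m}. idx w \<notin> est (r l) w)} > 0"
  shows "cond_prob M (\<lambda>w. idx w \<in> Iset p \<union> Jset)
           (\<lambda>w. idx w \<notin> est p w \<and> (\<forall>l\<in>{1..h}. idx w \<in> est (q l) w)
                 \<and> (\<forall>l\<in>{1..m}. idx w \<notin> est (r l) w)) =
    (let \<phi> = real T / (real N - real T) * \<epsilon> in
      ((1 - \<epsilon>) ^ h * \<epsilon> ^ (m + 1) * (real J / real N)
        + \<epsilon> * \<phi> ^ h * (1 - \<phi>) ^ m * (real I / real N))
      / ((1 - \<epsilon>) ^ h * \<epsilon> ^ (m + 1) * (real J / real N)
        + real h * (1 - \<epsilon>) * \<phi> ^ (h - 1) * (1 - \<phi>) ^ (m + 1) * (real I / real N)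
        + real (m + 1) * \<epsilon> * \<phi> ^ h * (1 - \<phi>) ^ m * (real I / real N)
        + \<phi> ^ h * (1 - \<phi>) ^ (m + 1)
            * ((real N - real J - real (m + h + 1) * real I) / real N)))"
proof -
  interpret sensor_selection M N I J \<epsilon> "real T / (real N - real T) * \<epsilon>" L Jset Iset est idx p q r h m
    by (intro sensor_selection.intro mixed_support_model.intro
        sensor_selection_axioms.intro mixed_support_model_axioms.intro) (fact assms)+
  show ?thesis
    using cond_prob_observed unfolding observed_def Let_def .
qed

end
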